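(* Let $u\in\{A,B,C\}^{\mathbb N}$ be a 3iet word with parameters $\varepsilon,\ell$, and let $\varepsilon=[0,a_1,a_2,\dots]$ be the continued fraction expansion of $\varepsilon$. Then $$ {\rm ind}(u)<+\infty \qquad\iff\qquad \sup_{n\in\mathbb N} a_n < +\infty\,. $$
   Context: Parameters $\varepsilon,\ell$ satisfy $\varepsilon\in(0,1)\setminus\mathbb Q$ and $\max\{\varepsilon,1-\varepsilon\}<\ell<1$. The three interval exchange $T_{\varepsilon,\ell}:[0,\ell)\to[0,\ell)$ is defined by $T_{\varepsilon,\ell}(x)=x+1-\varepsilon$ for $x\in I_A:=[0,\ell-1+\varepsilon)$, $T_{\varepsilon,\ell}(x)=x+1-2\varepsilon$ for $x\in I_B:=[\ell-1+\varepsilon,\varepsilon)$, and $T_{\varepsilon,\ell}(x)=x-\varepsilon$ for $x\in I_C:=[\varepsilon,\ell)$. A 3iet word with parameters $\varepsilon,\ell$ is the word $u=(u_n)_{n\in\mathbb N}$ over $\{A,B,C\}$ with $u_n=X$ iff $T_{\varepsilon,\ell}^n(x_0)\in I_X$, for some $x_0\in[0,\ell)$; its language and index do not depend on $x_0$. A word $v$ is a power $w^r$ ($r=|v|/|w|$) if $|v|\ge|w|$ and $v$ is a prefix of $www\cdots$; ${\rm ind}(w)=\sup\{r\in\mathbb Q: w^r \text{ is a factor of } u\}$ and ${\rm ind}(u)=\sup\{{\rm ind}(w): w \text{ a factor of } u\}$. *)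

theory Defs
  imports Complex_Main "HOL-Library.Extended_Real"
begin

datatype letter = A | B | C

definition T3 :: "real \<Rightarrow> real \<Rightarrow> real \<Rightarrow> real" where
  "T3 eps l x =
     (if x < l - 1 + eps then x + 1 - eps
      else if x < eps then x + 1 - 2 * eps
      else x - eps)"

definition coding :: "real \<Rightarrow> real \<Rightarrow> real \<Rightarrow> letter" where
  "coding eps l x =
     (if 0 \<le> x \<and> x < l - 1 + eps then A
      else if l - 1 + eps \<le> x \<and> x < eps then B
      else C)"

definition iet3_word :: "real \<Rightarrow> real \<Rightarrow> real \<Rightarrow> nat \<Rightarrow> letter" where
  "iet3_word eps l x0 n = coding eps l ((T3 eps l ^^ n) x0)"

definition is_factor :: "'a list \<Rightarrow> (nat \<Rightarrow> 'a) \<Rightarrow> bool" where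
  "is_factor v u \<longleftrightarrow> (\<exists>i. v = map u [i..<i + length v])"

text \<open>v is a power w^r with r = |v|/|w|: |v| \<ge> |w| and v is a prefix of www...\<close>
definition is_power_of :: "'a list \<Rightarrow> 'a list \<Rightarrow> bool" where
  "is_power_of v w \<longleftrightarrow> w \<noteq> [] \<and> length w \<le> length v \<and>
      (\<forall>k < length v. v ! k = w ! (k mod length w))"

definition word_index :: "'a list \<Rightarrow> (nat \<Rightarrow> 'a) \<Rightarrow> ereal" where
  "word_index w u = Sup {ereal (real (length v) / real (length w)) | v.
       is_power_of v w \<and> is_factor v u}"

definition index :: "(nat \<Rightarrow> 'a) \<Rightarrow> ereal" where
  "index u = Sup {word_index w u | w. w \<noteq> [] \<and> is_factor w u}"

text \<open>Continued fraction expansion eps = [0; a1, a2, ...] via the Gauss map.\<close>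
fun cf_rem :: "real \<Rightarrow> nat \<Rightarrow> real" where
  "cf_rem x 0 = x"
| "cf_rem x (Suc n) = frac (1 / cf_rem x n)"

definition cf_digit :: "real \<Rightarrow> nat \<Rightarrow> nat" where
  "cf_digit x n = (if n = 0 then nat \<lfloor>x\<rfloor> else nat \<lfloor>1 / cf_rem x (n - 1)\<rfloor>)"

end

theory Submission
  imports Defs "HOL-Analysis.Analysis"
begin

text \<open>The three interval exchange T is the map induced on [0, l) by the rotation
  R z = z - e (mod 1): a T-step is one or two R-steps, according as R z falls into [0, l) or not,
  and the letter of z records on which side of the discontinuities z and R z lie. A factor of
  length n with period q thus yields the rotation orbits of y and of R^s y (q \<le> s \<le> 2 q), which
  stay translates of each other, by some t = k - s e, for at least n - q steps.

  If the partial quotients of e are bounded by M, then |t| \<ge> 1 / ((M + 2) s), whereas a rotation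
  orbit of length m passes within |t| / 2 of an integer translate of the point in the middle of
  the pair, forcing one of the two orbits out of [0, 1) as soon as m is of order (M + 2)^2 q; so
  n / q is bounded. Conversely, a large partial quotient a_m gives a convergent denominator s with
  |s e - p| \<le> 1 / (a_m s). The set of points whose rotation orbits of length 2 R s keep away from
  the discontinuities by more than this has positive measure, so it is visited by the dense
  T-orbit, and there the coding repeats with a period at most s for more than R s steps.\<close>

lemma frac_irrational:
  fixes x :: real
  assumes "x \<notin> \<rat>"
  shows "frac x \<notin> \<rat>" and "0 < frac x"
proof -
  show irr: "frac x \<notin> \<rat>"
  proof
    assume "frac x \<in> \<rat>"
    then have "frac x + of_int \<lfloor>x\<rfloor> \<in> \<rat>" by simp
    with assms show False by (simp add: frac_def)
  qed
  have "frac x \<noteq> 0" using irr by (metis Rats_0)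
  then show "0 < frac x" using frac_ge_0[of x] by linarith
qed

lemma abs_diff_opposite_signs:
  fixes x y b c :: real
  assumes "x * y < 0" "0 \<le> b" "0 \<le> c"
  shows "\<bar>b * x - c * y\<bar> = b * \<bar>x\<bar> + c * \<bar>y\<bar>"
proof (cases "0 < x")
  case True
  then have "y < 0" using assms(1) by (simp add: mult_less_0_iff)
  then have "0 \<le> b * x" "c * y \<le> 0" using True assms by (simp_all add: mult_nonneg_nonpos)
  then show ?thesis using True \<open>y < 0\<close> by simp
next
  case False
  then have "x < 0" "0 < y" using assms(1) by (auto simp: mult_less_0_iff)
  then have "b * x \<le> 0" "0 \<le> c * y" using assms by (simp_all add: mult_nonneg_nonpos)
  then show ?thesis using \<open>x < 0\<close> \<open>0 < y\<close> by simp
qed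

lemma abs_add_less_if_mult_nonpos:
  fixes u v c :: real
  assumes "\<bar>u\<bar> < c" "\<bar>v\<bar> < c" "u * v \<le> 0"
  shows "\<bar>u + v\<bar> < c"
proof -
  have "0 \<le> u \<and> v \<le> 0 \<or> u \<le> 0 \<and> 0 \<le> v" using assms(3) by (auto simp: mult_le_0_iff)
  then show ?thesis using assms(1,2) by linarith
qed

lemma abs_add_opposite_signs_less:
  fixes x y s t :: real
  assumes "x * y < 0" "\<bar>y\<bar> < \<bar>x\<bar>" "0 \<le> s" "s < 1" "0 \<le> t" "t < 1"
  shows "\<bar>s * x + t * y\<bar> < \<bar>x\<bar>"
proof -
  have "0 < \<bar>x\<bar>" using assms(1) by auto
  then have "\<bar>s * x\<bar> < \<bar>x\<bar>" "\<bar>t * y\<bar> < \<bar>x\<bar>"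
    using assms mult_strict_right_mono[of s 1 "\<bar>x\<bar>"] mult_right_mono[of t 1 "\<bar>y\<bar>"]
    by (auto simp: abs_mult)
  moreover have "(s * x) * (t * y) \<le> 0"
    using assms mult_nonneg_nonneg[of s t] by (simp add: mult_nonneg_nonpos algebra_simps)
  ultimately show ?thesis by (rule abs_add_less_if_mult_nonpos)
qed

lemma abs_le_abs_add_if_mult_nonneg:
  fixes x y :: real
  assumes "0 \<le> x * y"
  shows "\<bar>x\<bar> \<le> \<bar>x + y\<bar>"
  using assms by (auto simp: zero_le_mult_iff)

lemma eq_if_int_diff:
  fixes x y :: real
  assumes "0 \<le> x" "x < 1" "0 \<le> y" "y < 1" "x - y = of_int k"
  shows "x = y"
proof -
  have "-1 < real_of_int k" "real_of_int k < 1" using assms by linarith+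
  then have "k = 0" by simp
  then show ?thesis using assms(5) by simp
qed

lemma no_int_strictly_between:
  fixes x t :: real
  assumes "\<bar>x + t / 2 - of_int c\<bar> < \<bar>t\<bar> / 2" "0 \<le> x" "x < 1" "0 \<le> x + t" "x + t < 1"
  shows False
proof -
  have "0 < real_of_int c \<and> real_of_int c < 1"
  proof (cases "0 \<le> t")
    case True
    then show ?thesis using assms unfolding abs_less_iff by linarith
  next
    case False
    then show ?thesis using assms unfolding abs_less_iff by linarith
  qed
  then have "0 < c" "c < 1" by simp_all
  then show False by linarith
qed

lemma ex_crossing:
  fixes f :: "nat \<Rightarrow> int"
  assumes "f 0 \<le> S" and "\<exists>n. S < f n"
  shows "\<exists>n. f n \<le> S \<and> S < f (Suc n)"
proof (rule ccontr)
  assume "\<not> ?thesis"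
  then have "f n \<le> S" for n by (induction n) (use assms(1) in auto)
  then show False using assms(2) by (simp add: not_less[symmetric])
qed

lemma exists_interval_avoiding_neighbourhoods:
  fixes c :: "'i \<Rightarrow> real"
  assumes "finite I" "0 \<le> \<rho>" "2 * \<rho> * real (card I) < b - a"
  shows "\<exists>z \<delta>. 0 < \<delta> \<and> a + \<delta> \<le> z \<and> z + \<delta> \<le> b \<and> (\<forall>x. \<bar>x - z\<bar> < \<delta> \<longrightarrow> (\<forall>i\<in>I. \<rho> < \<bar>x - c i\<bar>))"
proof -
  define U where "U = (\<Union>i\<in>I. {c i - \<rho> .. c i + \<rho>})"
  have "compact U" using assms(1) by (auto simp: U_def)
  have "measure lborel U \<le> (\<Sum>i\<in>I. measure lborel {c i - \<rho> .. c i + \<rho>})"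
    unfolding U_def by (rule measure_UNION_le[OF assms(1)]) auto
  also have "\<dots> = 2 * \<rho> * real (card I)" using assms(2) by simp
  finally have "measure lborel U < b - a" using assms(3) by linarith
  then have "\<not> {a<..<b} \<subseteq> U"
    using measure_mono_fmeasurable[of "{a<..<b}" U lborel] fmeasurable_compact[OF \<open>compact U\<close>]
      measure_nonneg[of lborel U]
    by (cases "a \<le> b") auto
  then obtain z where z: "z \<in> {a<..<b} - U" by blast
  moreover have "open ({a<..<b} - U)" using \<open>compact U\<close> by (intro open_Diff compact_imp_closed) auto
  ultimately obtain \<epsilon> where \<epsilon>: "0 < \<epsilon>" "ball z \<epsilon> \<subseteq> {a<..<b} - U"
    using open_contains_ball by blast
  define \<delta> where "\<delta> = min \<epsilon> (min (z - a) (b - z))"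
  have "0 < \<delta>" "a + \<delta> \<le> z" "z + \<delta> \<le> b" using \<epsilon> z by (auto simp: \<delta>_def)
  moreover have "\<rho> < \<bar>x - c i\<bar>" if "\<bar>x - z\<bar> < \<delta>" "i \<in> I" for x i
  proof -
    have "x \<in> ball z \<epsilon>" using that by (simp add: dist_real_def \<delta>_def abs_minus_commute)
    then have "x \<notin> U" using \<epsilon> by auto
    then show ?thesis using that(2) by (auto simp: U_def abs_le_iff)
  qed
  ultimately show ?thesis by blast
qed

section \<open>Periodic factors and the index\<close>

definition block_period :: "(nat \<Rightarrow> 'a) \<Rightarrow> nat \<Rightarrow> nat \<Rightarrow> nat \<Rightarrow> bool" where
  "block_period u i n q \<longleftrightarrow> (\<forall>k. k + q < n \<longrightarrow> u (i + k) = u (i + k + q))"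

lemma index_le_if_block_periods_bounded:
  assumes H: "\<And>i q n. 1 \<le> q \<Longrightarrow> q \<le> n \<Longrightarrow> block_period u i n q \<Longrightarrow> real n \<le> c * real q"
  shows "index u \<le> ereal c"
  unfolding index_def
proof (rule Sup_least)
  fix x assume "x \<in> {word_index w u |w. w \<noteq> [] \<and> is_factor w u}"
  then obtain w where x: "x = word_index w u" and "w \<noteq> []" by blast
  show "x \<le> ereal c" unfolding x word_index_def
  proof (rule Sup_least)
    fix z assume "z \<in> {ereal (real (length v) / real (length w)) |v. is_power_of v w \<and> is_factor v u}"
    then obtain v where z: "z = ereal (real (length v) / real (length w))"
      and pow: "is_power_of v w" and "is_factor v u"
      by blast
    then obtain i where i: "v = map u [i..<i + length v]" by (auto simp: is_factor_def)
    define q where "q = length w"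
    define n where "n = length v"
    have "1 \<le> q" using \<open>w \<noteq> []\<close> by (simp add: q_def Suc_le_eq)
    have "q \<le> n" and vw: "\<And>k. k < n \<Longrightarrow> v ! k = w ! (k mod q)"
      using pow by (auto simp: is_power_of_def q_def n_def)
    have vu: "\<And>k. k < n \<Longrightarrow> v ! k = u (i + k)" using i by (metis n_def add_diff_cancel_left' nth_map_upt)
    have "block_period u i n q"
      unfolding block_period_def
    proof (intro allI impI)
      fix k assume k: "k + q < n"
      have "u (i + k) = v ! k" using vu k by simp
      also have "\<dots> = w ! ((k + q) mod q)" using vw k by simp
      also have "\<dots> = v ! (k + q)" using vw k by simp
      also have "\<dots> = u (i + k + q)" using vu k by (simp add: add.assoc)
      finally show "u (i + k) = u (i + k + q)" .
    qed
    then have "real n \<le> c * real q" using H \<open>1 \<le> q\<close> \<open>q \<le> n\<close> by blast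
    then show "z \<le> ereal c" using \<open>1 \<le> q\<close> \<open>w \<noteq> []\<close> by (simp add: z q_def n_def divide_le_eq)
  qed
qed

lemma index_ge_block_period:
  assumes "1 \<le> q" "q \<le> n" and per: "block_period u i n q"
  shows "ereal (real n / real q) \<le> index u"
proof -
  have periodic: "u (i + k) = u (i + k mod q)" if "k < n" for k
    using that
  proof (induction k rule: less_induct)
    case (less k)
    show ?case
    proof (cases "k < q")
      case False
      then obtain k' where k': "k = k' + q" by (metis add.commute le_add_diff_inverse not_less)
      then have "u (i + k) = u (i + k')" using per less.prems by (simp add: block_period_def add.assoc)
      also have "\<dots> = u (i + k' mod q)" using less.IH[of k'] k' less.prems assms(1) by simp
      finally show ?thesis using k' by simp
    qed simp
  qed
  define w where "w = map u [i..<i + q]"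
  define v where "v = map u [i..<i + n]"
  have "w \<noteq> []" using assms(1) by (simp add: w_def)
  have "is_power_of v w"
    unfolding is_power_of_def using assms(1,2) periodic by (simp add: w_def v_def)
  moreover have "is_factor v u" "is_factor w u"
    unfolding is_factor_def by (auto simp: v_def w_def intro: exI[of _ i])
  ultimately have "ereal (real n / real q) \<le> word_index w u"
    unfolding word_index_def by (intro Sup_upper) (auto simp: v_def w_def intro!: exI[of _ v])
  also have "word_index w u \<le> index u"
    unfolding index_def using \<open>w \<noteq> []\<close> \<open>is_factor w u\<close> by (intro Sup_upper) auto
  finally show ?thesis .
qed

section \<open>Convergents of an irrational number\<close>

text \<open>Numerators and denominators of the convergents of x \<in> (0, 1), shifted by one index: the
  usual n-th convergent is cf_num x (n + 1) / cf_den x (n + 1).\<close>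

fun cf_den :: "real \<Rightarrow> nat \<Rightarrow> int" where
  "cf_den x 0 = 0"
| "cf_den x (Suc 0) = 1"
| "cf_den x (Suc (Suc n)) = int (cf_digit x (Suc n)) * cf_den x (Suc n) + cf_den x n"

fun cf_num :: "real \<Rightarrow> nat \<Rightarrow> int" where
  "cf_num x 0 = 1"
| "cf_num x (Suc 0) = 0"
| "cf_num x (Suc (Suc n)) = int (cf_digit x (Suc n)) * cf_num x (Suc n) + cf_num x n"

locale irrational_unit =
  fixes e :: real
  assumes e_pos: "0 < e" and e_less_1: "e < 1" and e_irrational: "e \<notin> \<rat>"
begin

abbreviation "r \<equiv> cf_rem e"
abbreviation "a \<equiv> cf_digit e"
abbreviation "Q \<equiv> cf_den e"
abbreviation "P \<equiv> cf_num e"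

definition err :: "nat \<Rightarrow> real" where
  "err n = of_int (Q n) * e - of_int (P n)"

lemma cf_rem_bounds: "0 < r n \<and> r n < 1 \<and> r n \<notin> \<rat>"
proof (induction n)
  case 0
  then show ?case using e_pos e_less_1 e_irrational by simp
next
  case (Suc n)
  then have "1 / r n \<notin> \<rat>" by (metis Rats_divide Rats_1 divide_divide_eq_right div_by_1 mult_1)
  then show ?case using frac_irrational[of "1 / r n"] frac_lt_1 by auto
qed

lemma cf_rem_pos: "0 < r n" and cf_rem_less_1: "r n < 1"
  using cf_rem_bounds by auto

lemma cf_digit_0: "a 0 = 0"
  using e_pos e_less_1 by (simp add: cf_digit_def)

lemma cf_digit_Suc_floor: "1 \<le> \<lfloor>1 / r n\<rfloor>"
proof -
  have "1 < 1 / r n" using cf_rem_pos[of n] cf_rem_less_1[of n] by simp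
  then show ?thesis by linarith
qed

lemma cf_digit_Suc: "real (a (Suc n)) = of_int \<lfloor>1 / r n\<rfloor>"
proof -
  have "0 \<le> \<lfloor>1 / r n\<rfloor>" using cf_digit_Suc_floor[of n] by linarith
  then show ?thesis by (simp add: cf_digit_def)
qed

lemma cf_digit_ge_1: "1 \<le> a (Suc n)"
  using cf_digit_Suc[of n] cf_digit_Suc_floor[of n] by linarith

lemma cf_rem_inverse: "1 / r n = real (a (Suc n)) + r (Suc n)"
  by (simp add: cf_digit_Suc frac_def)

lemma err_Suc: "err (Suc n) = - err n * r n"
proof (induction n)
  case 0
  then show ?case by (simp add: err_def)
next
  case (Suc n)
  have "err (Suc (Suc n)) = real (a (Suc n)) * err (Suc n) + err n"
    by (simp add: err_def algebra_simps)
  moreover have "err n = - err (Suc n) / r n" using Suc cf_rem_pos[of n] by simp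
  moreover have "real (a (Suc n)) = 1 / r n - r (Suc n)" using cf_rem_inverse[of n] by simp
  ultimately show ?case using cf_rem_pos[of n] by (simp add: field_simps)
qed

lemma cf_den_num_det: "Q (Suc n) * P n - Q n * P (Suc n) = (-1) ^ n"
  by (induction n) (simp_all add: algebra_simps)

lemma cf_den_basics: "0 \<le> Q n \<and> 1 \<le> Q (Suc n) \<and> Q n \<le> Q (Suc n)"
proof (induction n)
  case 0
  then show ?case by simp
next
  case (Suc n)
  have "1 * Q (Suc n) \<le> int (a (Suc n)) * Q (Suc n)"
    using Suc cf_digit_ge_1[of n] by (intro mult_right_mono) auto
  moreover have "Q (Suc (Suc n)) = int (a (Suc n)) * Q (Suc n) + Q n" by simp
  ultimately show ?case using Suc by linarith
qed

lemma cf_den_nonneg: "0 \<le> Q n" and cf_den_Suc_ge_1: "1 \<le> Q (Suc n)"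
  and cf_den_mono_Suc: "Q n \<le> Q (Suc n)"
  using cf_den_basics by auto

lemma cf_den_ge: "int k + 1 \<le> Q (Suc (2 * k))"
proof (induction k)
  case 0
  then show ?case by simp
next
  case (Suc k)
  let ?m = "Suc (2 * k)"
  have "1 \<le> int (a (Suc ?m))" using cf_digit_ge_1 by simp
  then have "1 * 1 \<le> int (a (Suc ?m)) * Q (Suc ?m)"
    by (rule mult_mono[OF _ cf_den_Suc_ge_1]) simp_all
  moreover have "Suc (2 * Suc k) = Suc (Suc ?m)" by simp
  then have "Q (Suc (2 * Suc k)) = int (a (Suc ?m)) * Q (Suc ?m) + Q ?m"
    by (simp only: cf_den.simps)
  ultimately show ?case using Suc by linarith
qed

lemma cf_den_unbounded: "\<exists>n. b < Q n"
  using cf_den_ge[of "nat (b + 1)"] by (intro exI[of _ "Suc (2 * nat (b + 1))"]) linarith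

lemma err_nonzero: "err n \<noteq> 0"
proof (induction n)
  case 0
  then show ?case by (simp add: err_def)
next
  case (Suc n)
  then show ?case using err_Suc[of n] cf_rem_pos[of n] by simp
qed

lemma abs_err_decreasing: "\<bar>err (Suc n)\<bar> < \<bar>err n\<bar>"
  using err_Suc[of n] cf_rem_pos[of n] cf_rem_less_1[of n] err_nonzero[of n]
  by (simp add: abs_mult)

lemma err_alternating: "err n * err (Suc n) < 0"
proof -
  have "0 < err n * err n" using err_nonzero[of n] not_real_square_gt_zero by blast
  moreover have "err n * err (Suc n) = - ((err n * err n) * r n)" by (simp add: err_Suc)
  ultimately show ?thesis using cf_rem_pos[of n] by simp
qed

lemma err_combination:
  "of_int (i * Q n + j * Q (Suc n)) * e - of_int (i * P n + j * P (Suc n))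
     = of_int i * err n + of_int j * err (Suc n)"
  by (simp add: err_def algebra_simps)

lemma err_det: "of_int (Q n) * err (Suc n) - of_int (Q (Suc n)) * err n = (-1) ^ n"
proof -
  have "of_int (Q n) * err (Suc n) - of_int (Q (Suc n)) * err n
      = real_of_int (Q (Suc n) * P n - Q n * P (Suc n))"
    by (simp add: err_def algebra_simps)
  then show ?thesis by (simp add: cf_den_num_det)
qed

lemma abs_err_identity: "of_int (Q (Suc n)) * \<bar>err n\<bar> + of_int (Q n) * \<bar>err (Suc n)\<bar> = 1"
proof -
  have "\<bar>of_int (Q (Suc n)) * err n - of_int (Q n) * err (Suc n)\<bar> = 1"
    using err_det[of n] by (simp add: abs_minus_commute)
  then show ?thesis
    using abs_diff_opposite_signs[OF err_alternating] cf_den_nonneg by simp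
qed

lemma abs_err_upper: "\<bar>err n\<bar> * of_int (Q (Suc n)) \<le> 1"
proof -
  have "0 \<le> of_int (Q n) * \<bar>err (Suc n)\<bar>" using cf_den_nonneg[of n] by simp
  then show ?thesis using abs_err_identity[of n] by (simp add: mult.commute)
qed

lemma abs_err_lower: "1 \<le> of_int (Q (Suc n) + Q n) * \<bar>err n\<bar>"
proof -
  have "of_int (Q n) * \<bar>err (Suc n)\<bar> \<le> of_int (Q n) * \<bar>err n\<bar>"
    using cf_den_nonneg[of n] abs_err_decreasing[of n] by (simp add: mult_left_mono)
  then show ?thesis using abs_err_identity[of n] by (simp add: algebra_simps)
qed

lemma err_small: "0 < \<delta> \<Longrightarrow> \<exists>n. \<bar>err n\<bar> < \<delta>"
proof -
  assume "0 < \<delta>"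
  obtain n where n: "\<lceil>1 / \<delta>\<rceil> < Q n" using cf_den_unbounded by blast
  then have "1 / \<delta> < of_int (Q (Suc n))" using cf_den_mono_Suc[of n] by linarith
  then have "1 < \<delta> * of_int (Q (Suc n))" using \<open>0 < \<delta>\<close> by (simp add: field_simps)
  then have "\<bar>err n\<bar> * of_int (Q (Suc n)) < \<delta> * of_int (Q (Suc n))"
    using abs_err_upper[of n] by linarith
  then show ?thesis using cf_den_Suc_ge_1[of n] by (intro exI[of _ n]) simp
qed

lemma cf_den_Suc_Suc_le:
  assumes "\<And>k. a k \<le> M"
  shows "Q (Suc (Suc n)) \<le> int (M + 1) * Q (Suc n)"
proof -
  have "int (a (Suc n)) * Q (Suc n) \<le> int M * Q (Suc n)"
    using assms[of "Suc n"] cf_den_nonneg[of "Suc n"] by (intro mult_right_mono) auto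
  then show ?thesis using cf_den_mono_Suc[of n] by (simp add: algebra_simps)
qed

lemma err_covering:
  "\<exists>j::nat. \<exists>k::int. int j < Q n + Q (Suc n) \<and> \<bar>real j * e - of_int k - y\<bar> < \<bar>err n\<bar>"
proof -
  define \<sigma> :: real where "\<sigma> = (-1) ^ n"
  have \<sigma>: "\<sigma> * \<sigma> = 1" by (simp add: \<sigma>_def flip: power_add)
  define \<alpha> where "\<alpha> = - of_int (Q (Suc n)) * y * \<sigma>"
  define \<beta> where "\<beta> = of_int (Q n) * y * \<sigma>"
  have \<alpha>\<beta>_den: "\<alpha> * of_int (Q n) + \<beta> * of_int (Q (Suc n)) = 0"
    by (simp add: \<alpha>_def \<beta>_def algebra_simps)
  have "\<alpha> * err n + \<beta> * err (Suc n)
      = y * \<sigma> * (of_int (Q n) * err (Suc n) - of_int (Q (Suc n)) * err n)"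
    by (simp add: \<alpha>_def \<beta>_def algebra_simps)
  then have \<alpha>\<beta>_err: "\<alpha> * err n + \<beta> * err (Suc n) = y"
    using \<sigma> by (simp add: err_det flip: \<sigma>_def)
  define i where "i = \<lceil>\<alpha>\<rceil>"
  define j where "j = \<lceil>\<beta>\<rceil>"
  define s where "s = of_int i - \<alpha>"
  define t where "t = of_int j - \<beta>"
  have s: "0 \<le> s" "s < 1" and t: "0 \<le> t" "t < 1"
    unfolding s_def t_def i_def j_def by linarith+
  define J where "J = i * Q n + j * Q (Suc n)"
  define K where "K = i * P n + j * P (Suc n)"
  have J: "of_int J = s * of_int (Q n) + t * of_int (Q (Suc n))"
    using \<alpha>\<beta>_den by (simp add: J_def s_def t_def algebra_simps)
  have "0 \<le> s * of_int (Q n)" "s * of_int (Q n) \<le> of_int (Q n)"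
    "0 \<le> t * of_int (Q (Suc n))" "t * of_int (Q (Suc n)) < of_int (Q (Suc n))"
    using s t cf_den_nonneg[of n] cf_den_Suc_ge_1[of n] by (simp_all add: mult_left_le_one_le)
  then have "0 \<le> J" "J < Q n + Q (Suc n)" using J by linarith+
  moreover have "of_int J * e - of_int K - y = s * err n + t * err (Suc n)"
    using err_combination[of i n j] \<alpha>\<beta>_err by (simp add: J_def K_def s_def t_def algebra_simps)
  moreover have "\<bar>s * err n + t * err (Suc n)\<bar> < \<bar>err n\<bar>"
    using abs_add_opposite_signs_less[OF err_alternating abs_err_decreasing s t] .
  ultimately show ?thesis by (intro exI[of _ "nat J"] exI[of _ K]) simp
qed

lemma cf_basis:
  "\<exists>i j. s = i * Q n + j * Q (Suc n) \<and> p = i * P n + j * P (Suc n)"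
proof -
  define \<sigma> :: int where "\<sigma> = (-1) ^ n"
  have \<sigma>: "\<sigma> * \<sigma> = 1" by (simp add: \<sigma>_def flip: power_add)
  define i where "i = - \<sigma> * (P (Suc n) * s - Q (Suc n) * p)"
  define j where "j = \<sigma> * (P n * s - Q n * p)"
  have "i * Q n + j * Q (Suc n) = (\<sigma> * s) * (Q (Suc n) * P n - Q n * P (Suc n))"
    "i * P n + j * P (Suc n) = (\<sigma> * p) * (Q (Suc n) * P n - Q n * P (Suc n))"
    by (simp_all add: i_def j_def algebra_simps)
  then have "i * Q n + j * Q (Suc n) = (\<sigma> * \<sigma>) * s" "i * P n + j * P (Suc n) = (\<sigma> * \<sigma>) * p"
    by (simp_all add: cf_den_num_det \<sigma>_def)
  then show ?thesis using \<sigma> by auto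
qed

lemma best_approximation:
  assumes "1 \<le> s" "s < Q (Suc n)"
  shows "\<bar>err n\<bar> \<le> \<bar>of_int s * e - of_int p\<bar>"
proof -
  obtain i j where s: "s = i * Q n + j * Q (Suc n)" and p: "p = i * P n + j * P (Suc n)"
    using cf_basis by blast
  have "0 < i \<and> j \<le> 0 \<or> i < 0 \<and> 1 \<le> j"
  proof (cases "j \<le> 0")
    case True
    then have "j * Q (Suc n) \<le> 0" using cf_den_Suc_ge_1[of n] by (simp add: mult_nonpos_nonneg)
    then have "0 < i * Q n" using assms s by linarith
    then show ?thesis using True cf_den_nonneg[of n] by (auto simp: zero_less_mult_iff)
  next
    case False
    then have "1 * Q (Suc n) \<le> j * Q (Suc n)"
      using cf_den_Suc_ge_1[of n] by (intro mult_right_mono) auto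
    then have "i * Q n < 0" using assms s by linarith
    then show ?thesis using False cf_den_nonneg[of n] by (auto simp: mult_less_0_iff)
  qed
  then have "1 \<le> \<bar>i\<bar>" and "i * j \<le> 0" by (auto simp: mult_le_0_iff)
  have "\<bar>err n\<bar> \<le> \<bar>of_int i * err n\<bar>"
    using \<open>1 \<le> \<bar>i\<bar>\<close> mult_right_mono[of 1 "\<bar>of_int i\<bar>" "\<bar>err n\<bar>"] by (simp add: abs_mult)
  also have "\<dots> \<le> \<bar>of_int i * err n + of_int j * err (Suc n)\<bar>"
  proof (rule abs_le_abs_add_if_mult_nonneg)
    have "of_int i * err n * (of_int j * err (Suc n)) = of_int (i * j) * (err n * err (Suc n))"
      by (simp add: algebra_simps)
    moreover have "0 \<le> of_int (i * j) * (err n * err (Suc n))"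
      using \<open>i * j \<le> 0\<close> err_alternating[of n] by (intro mult_nonpos_nonpos) (simp_all flip: of_int_mult)
    ultimately show "0 \<le> of_int i * err n * (of_int j * err (Suc n))" by linarith
  qed
  also have "\<dots> = \<bar>of_int s * e - of_int p\<bar>" using err_combination s p by simp
  finally show ?thesis .
qed

lemma badly_approximable:
  assumes M: "\<And>k. a k \<le> M" and "1 \<le> s"
  shows "1 \<le> real (M + 2) * of_int s * \<bar>of_int s * e - of_int p\<bar>"
proof -
  obtain n where n: "Q (Suc n) \<le> s" "s < Q (Suc (Suc n))"
    using ex_crossing[of "\<lambda>k. Q (Suc k)" s] assms(2) cf_den_unbounded cf_den_mono_Suc
    by (metis cf_den.simps(2) Suc_pred gr0I less_le_trans not_less)
  have "1 \<le> of_int (Q (Suc (Suc n)) + Q (Suc n)) * \<bar>err (Suc n)\<bar>" by (rule abs_err_lower)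
  also have "\<dots> \<le> real (M + 2) * of_int s * \<bar>err (Suc n)\<bar>"
  proof -
    have "Q (Suc (Suc n)) + Q (Suc n) \<le> int (M + 2) * Q (Suc n)"
      using cf_den_Suc_Suc_le[OF M, of n] by (simp add: algebra_simps)
    also have "\<dots> \<le> int (M + 2) * s" using n(1) by (intro mult_left_mono) auto
    finally have "real_of_int (Q (Suc (Suc n)) + Q (Suc n)) \<le> real (M + 2) * of_int s"
      by (metis of_int_le_iff of_int_mult of_int_of_nat_eq)
    then show ?thesis by (intro mult_right_mono) auto
  qed
  also have "\<dots> \<le> real (M + 2) * of_int s * \<bar>of_int s * e - of_int p\<bar>"
    using best_approximation[OF assms(2) n(2)] assms(2) by (intro mult_left_mono) auto
  finally show ?thesis .
qed

lemma exists_covering_scale: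
  assumes M: "\<And>k. a k \<le> M" and "M + 1 \<le> m"
  shows "\<exists>n. Q n + Q (Suc n) \<le> int m \<and> \<bar>err n\<bar> * real m < real M + 2"
proof -
  have "\<exists>k. int m < Q (Suc k) + Q (Suc (Suc k))"
  proof -
    obtain k where "int m < Q k" using cf_den_unbounded by blast
    then show ?thesis using cf_den_nonneg cf_den_mono_Suc[of k] cf_den_mono_Suc[of "Suc k"]
      by (intro exI[of _ k]) linarith
  qed
  moreover have "Q (Suc 0) + Q (Suc (Suc 0)) \<le> int m" using M[of 1] assms(2) by simp
  ultimately obtain n where n: "Q (Suc n) + Q (Suc (Suc n)) \<le> int m"
    "int m < Q (Suc (Suc n)) + Q (Suc (Suc (Suc n)))"
    using ex_crossing[of "\<lambda>k. Q (Suc k) + Q (Suc (Suc k))" "int m"] by auto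
  have "int m < int (M + 2) * Q (Suc (Suc n))"
    using n(2) cf_den_Suc_Suc_le[OF M, of "Suc n"] by (simp add: algebra_simps)
  then have "real m < real (M + 2) * of_int (Q (Suc (Suc n)))"
    by (metis of_int_less_iff of_int_mult of_int_of_nat_eq)
  then have "\<bar>err (Suc n)\<bar> * real m < \<bar>err (Suc n)\<bar> * (real (M + 2) * of_int (Q (Suc (Suc n))))"
    using err_nonzero[of "Suc n"] by (intro mult_strict_left_mono) auto
  also have "\<dots> = real (M + 2) * (\<bar>err (Suc n)\<bar> * of_int (Q (Suc (Suc n))))" by simp
  also have "\<dots> \<le> real (M + 2)" using abs_err_upper[of "Suc n"] by (simp add: mult_left_le)
  finally have "\<bar>err (Suc n)\<bar> * real m < real (M + 2)" .
  then show ?thesis using n(1) by (intro exI[of _ "Suc n"]) simp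
qed

lemma abs_err_digit: "\<bar>err n\<bar> * real (a n) * of_int (Q n) \<le> 1"
proof (cases n)
  case 0
  then show ?thesis by (simp add: cf_digit_0)
next
  case (Suc m)
  have "int (a (Suc m)) * Q (Suc m) \<le> Q (Suc (Suc m))" using cf_den_nonneg[of m] by simp
  then have "real (a (Suc m)) * of_int (Q (Suc m)) \<le> of_int (Q (Suc (Suc m)))"
    by (metis of_int_le_iff of_int_mult of_int_of_nat_eq)
  then have "\<bar>err n\<bar> * (real (a n) * of_int (Q n)) \<le> \<bar>err n\<bar> * of_int (Q (Suc n))"
    using Suc by (intro mult_left_mono) auto
  then show ?thesis using abs_err_upper[of n] by (simp add: mult.assoc)
qed

lemma abs_err_small_if_digit_large:
  assumes "0 \<le> c" "c < real (a m)"
  shows "c * of_int (Q m) * \<bar>err m\<bar> < 1"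
proof -
  obtain m' where "m = Suc m'" using assms cf_digit_0 by (cases m) auto
  then have "0 < real_of_int (Q m)" using cf_den_Suc_ge_1[of m'] by simp
  then have "0 < real_of_int (Q m) * \<bar>err m\<bar>" using err_nonzero[of m] by simp
  then have "c * (of_int (Q m) * \<bar>err m\<bar>) < real (a m) * (of_int (Q m) * \<bar>err m\<bar>)"
    by (rule mult_strict_right_mono[OF assms(2)])
  also have "\<dots> \<le> 1" using abs_err_digit[of m] by (simp add: algebra_simps)
  finally show ?thesis by (simp add: algebra_simps)
qed

definition rot :: "real \<Rightarrow> real" where
  "rot z = (if z < e then z - e + 1 else z - e)"

lemma rot_range: "0 \<le> z \<Longrightarrow> z < 1 \<Longrightarrow> 0 \<le> rot z \<and> rot z < 1"
  using e_pos e_less_1 by (auto simp: rot_def)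

lemma rot_iter_range: "0 \<le> z \<Longrightarrow> z < 1 \<Longrightarrow> 0 \<le> (rot ^^ j) z \<and> (rot ^^ j) z < 1"
  by (induction j) (auto simp: rot_range)

lemma rot_iter_eq: "\<exists>k::int. (rot ^^ j) z = z - real j * e + of_int k"
proof (induction j)
  case 0
  then show ?case by (intro exI[of _ 0]) simp
next
  case (Suc j)
  then obtain k where k: "(rot ^^ j) z = z - real j * e + of_int k" by blast
  show ?case
  proof (cases "(rot ^^ j) z < e")
    case True
    then have "(rot ^^ Suc j) z = (rot ^^ j) z - e + 1" by (simp add: rot_def)
    then show ?thesis using k by (intro exI[of _ "k + 1"]) (simp add: algebra_simps del: funpow.simps)
  next
    case False
    then have "(rot ^^ Suc j) z = (rot ^^ j) z - e" by (simp add: rot_def)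
    then show ?thesis using k by (intro exI[of _ k]) (simp add: algebra_simps del: funpow.simps)
  qed
qed

lemma rot_iter_unique:
  assumes "0 \<le> z" "z < 1" "0 \<le> w" "w < 1" and w: "w = z - real j * e + of_int k"
  shows "(rot ^^ j) z = w"
proof -
  obtain k' where k': "(rot ^^ j) z = z - real j * e + of_int k'" using rot_iter_eq by blast
  have "(rot ^^ j) z - w = of_int (k' - k)" unfolding k' w by simp
  moreover have "0 \<le> (rot ^^ j) z" "(rot ^^ j) z < 1" using rot_iter_range[OF assms(1,2)] by auto
  ultimately show ?thesis using eq_if_int_diff assms(3,4) by blast
qed

lemma rot_iter_inj: "(rot ^^ p) z = (rot ^^ q) z \<Longrightarrow> p = q"
proof (rule ccontr)
  assume eq: "(rot ^^ p) z = (rot ^^ q) z" and "p \<noteq> q"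
  obtain k k' where "(rot ^^ p) z = z - real p * e + of_int k" "(rot ^^ q) z = z - real q * e + of_int k'"
    using rot_iter_eq by meson
  with eq have "(real p - real q) * e = of_int (k - k')" by (simp add: algebra_simps)
  with \<open>p \<noteq> q\<close> have "e = of_int (k - k') / (real p - real q)" by (simp add: field_simps)
  also have "\<dots> \<in> \<rat>" by (intro Rats_divide) (auto simp: Rats_diff)
  finally show False using e_irrational by simp
qed

lemma rot_translate: "(z < e \<longleftrightarrow> z' < e) \<Longrightarrow> rot z' = rot z + (z' - z)"
  by (auto simp: rot_def)

lemma rot_orbit_translate_leaves_unit_interval:
  assumes "0 \<le> y" "y < 1" and "Q n + Q (Suc n) \<le> int J + 1" and "2 * \<bar>err n\<bar> < \<bar>t\<bar>"
  shows "\<exists>j \<le> J. (rot ^^ j) y + t \<notin> {0..<1}"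
proof -
  obtain j k where j: "int j < Q n + Q (Suc n)" and k: "\<bar>real j * e - of_int k - (y + t / 2)\<bar> < \<bar>err n\<bar>"
    using err_covering[of n "y + t / 2"] by blast
  obtain k' where k': "(rot ^^ j) y = y - real j * e + of_int k'" using rot_iter_eq by blast
  define c where "c = k' - k"
  have "(rot ^^ j) y + t / 2 - of_int c = - (real j * e - of_int k - (y + t / 2))"
    using k' by (simp add: c_def)
  then have c: "\<bar>(rot ^^ j) y + t / 2 - of_int c\<bar> < \<bar>t\<bar> / 2"
    using k assms(4) by (simp only: abs_minus_cancel)
  then have "(rot ^^ j) y + t \<notin> {0..<1}"
    using no_int_strictly_between rot_iter_range[OF assms(1,2), of j] by auto
  moreover have "j \<le> J" using j assms(3) by linarith
  ultimately show ?thesis by blast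
qed

end

section \<open>The three interval exchange as an induced rotation\<close>

locale iet3 = irrational_unit +
  fixes l :: real
  assumes l_gt: "max e (1 - e) < l" and l_less_1: "l < 1"
begin

abbreviation "T \<equiv> T3 e l"
abbreviation "cod \<equiv> coding e l"

definition rot_steps :: "real \<Rightarrow> nat" where
  "rot_steps z = (if rot z < l then 1 else 2)"

primrec rot_time :: "real \<Rightarrow> nat \<Rightarrow> nat" where
  "rot_time z 0 = 0"
| "rot_time z (Suc k) = rot_time z k + rot_steps ((T ^^ k) z)"

lemma T_eq_rot: "0 \<le> z \<Longrightarrow> z < l \<Longrightarrow> T z = (if rot z < l then rot z else rot (rot z))"
  using l_gt l_less_1 e_pos e_less_1 by (auto simp: T3_def rot_def)

lemma T_range: "0 \<le> z \<Longrightarrow> z < l \<Longrightarrow> 0 \<le> T z \<and> T z < l"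
  using l_gt l_less_1 e_pos e_less_1 by (auto simp: T3_def)

lemma T_iter_range: "0 \<le> z \<Longrightarrow> z < l \<Longrightarrow> 0 \<le> (T ^^ k) z \<and> (T ^^ k) z < l"
  by (induction k) (auto simp: T_range)

lemma rot_time_bounds: "k \<le> rot_time z k \<and> rot_time z k \<le> 2 * k"
  by (induction k) (auto simp: rot_steps_def)

lemma T_iter_eq_rot_iter: "0 \<le> z \<Longrightarrow> z < l \<Longrightarrow> (T ^^ k) z = (rot ^^ rot_time z k) z"
proof (induction k)
  case 0
  then show ?case by simp
next
  case (Suc k)
  define w where "w = (T ^^ k) z"
  have w: "0 \<le> w" "w < l" using T_iter_range[OF Suc.prems] by (auto simp: w_def)
  have "(T ^^ Suc k) z = (rot ^^ rot_steps w) w"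
    using T_eq_rot[OF w] by (simp add: w_def rot_steps_def numeral_2_eq_2)
  also have "\<dots> = (rot ^^ (rot_steps w + rot_time z k)) z"
    using Suc by (simp add: w_def funpow_add)
  finally show ?case by (simp add: w_def add.commute)
qed

lemma T_orbit_reaches:
  "0 \<le> z \<Longrightarrow> z < l \<Longrightarrow> 0 \<le> (rot ^^ j) z \<Longrightarrow> (rot ^^ j) z < l \<Longrightarrow> \<exists>i. (T ^^ i) z = (rot ^^ j) z"
proof (induction j arbitrary: z rule: less_induct)
  case (less j)
  show ?case
  proof (cases j)
    case 0
    then show ?thesis by (intro exI[of _ 0]) simp
  next
    case (Suc j')
    have "0 \<le> T z" "T z < l" using T_range less.prems by auto
    consider "rot z < l" "T z = rot z" "(rot ^^ j) z = (rot ^^ j') (T z)"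
      | "\<not> rot z < l" "T z = rot (rot z)"
      using T_eq_rot[OF less.prems(1,2)] Suc by (auto simp: funpow_swap1)
    then show ?thesis
    proof cases
      case 1
      then obtain i where "(T ^^ i) (T z) = (rot ^^ j') (T z)"
        using less.IH[of j' "T z"] Suc \<open>0 \<le> T z\<close> less.prems by auto
      then show ?thesis using 1 by (intro exI[of _ "Suc i"]) (simp add: funpow_swap1)
    next
      case 2
      then obtain j'' where j'': "j' = Suc j''" using less.prems Suc by (cases j') auto
      then have "(rot ^^ j) z = (rot ^^ j'') (T z)" using 2 Suc by (simp add: funpow_swap1)
      moreover obtain i where "(T ^^ i) (T z) = (rot ^^ j'') (T z)"
        using less.IH[of j'' "T z"] Suc j'' \<open>0 \<le> T z\<close> \<open>T z < l\<close> less.prems calculation by auto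
      ultimately show ?thesis by (intro exI[of _ "Suc i"]) (simp add: funpow_swap1)
    qed
  qed
qed

lemma coding_ne_B_iff: "0 \<le> z \<Longrightarrow> z < l \<Longrightarrow> cod z \<noteq> B \<longleftrightarrow> rot z < l"
  using l_gt l_less_1 e_pos e_less_1 by (auto simp: coding_def rot_def)

lemma coding_ne_C_iff: "0 \<le> z \<Longrightarrow> z < l \<Longrightarrow> cod z \<noteq> C \<longleftrightarrow> z < e"
  using l_gt l_less_1 e_pos e_less_1 by (auto simp: coding_def)

lemma same_coding_translate:
  assumes y: "0 \<le> y" "y < l" and y': "0 \<le> y'" "y' < l"
    and codes: "\<forall>k<m. cod ((T ^^ k) y) = cod ((T ^^ k) y')"
  shows "rot_time y' m = rot_time y m \<and> (\<forall>j \<le> rot_time y m. (rot ^^ j) y' = (rot ^^ j) y + (y' - y))"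
  using codes
proof (induction m)
  case 0
  then show ?case by simp
next
  case (Suc m)
  then have time: "rot_time y' m = rot_time y m"
    and IH: "\<And>j. j \<le> rot_time y m \<Longrightarrow> (rot ^^ j) y' = (rot ^^ j) y + (y' - y)"
    by auto
  define S where "S = rot_time y m"
  define w where "w = (T ^^ m) y"
  define w' where "w' = (T ^^ m) y'"
  have wS: "w = (rot ^^ S) y" and wS': "w' = (rot ^^ S) y'"
    using T_iter_eq_rot_iter[OF y] T_iter_eq_rot_iter[OF y'] time by (simp_all add: w_def w'_def S_def)
  have w: "0 \<le> w" "w < l" and w': "0 \<le> w'" "w' < l"
    using T_iter_range[OF y] T_iter_range[OF y'] by (auto simp: w_def w'_def)
  have "cod w = cod w'" using Suc.prems by (simp add: w_def w'_def)
  then have side_e: "w < e \<longleftrightarrow> w' < e" and side_l: "rot w < l \<longleftrightarrow> rot w' < l"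
    using coding_ne_C_iff[OF w] coding_ne_C_iff[OF w'] coding_ne_B_iff[OF w] coding_ne_B_iff[OF w']
    by auto
  have shift: "w' = w + (y' - y)" using IH[of S] wS wS' by (simp add: S_def)
  have rot_shift: "rot w' = rot w + (y' - y)" using rot_translate[OF side_e] shift by simp
  have steps: "rot_steps w' = rot_steps w" using side_l by (simp add: rot_steps_def)
  have "(rot ^^ j) y' = (rot ^^ j) y + (y' - y)" if j: "j \<le> S + rot_steps w" for j
  proof -
    consider "j \<le> S" | "j = Suc S" | "j = Suc (Suc S)" "\<not> rot w < l"
      using j by (cases "rot w < l") (auto simp: rot_steps_def le_Suc_eq)
    then show ?thesis
    proof cases
      case 1
      then show ?thesis using IH by (simp add: S_def)
    next
      case 2
      then show ?thesis using rot_shift wS wS' by simp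
    next
      case 3
      then have "e \<le> rot w" "e \<le> rot w'" using side_l l_gt by auto
      then have "rot (rot w') = rot (rot w) + (y' - y)" using rot_shift by (simp add: rot_def)
      then show ?thesis using 3 wS wS' by simp
    qed
  qed
  then show ?case using time steps by (simp add: S_def w_def w'_def)
qed

definition same_side :: "real \<Rightarrow> real \<Rightarrow> bool" where
  "same_side z z' \<longleftrightarrow> 0 \<le> z' \<and> z' < 1 \<and> (z < l - 1 + e \<longleftrightarrow> z' < l - 1 + e) \<and>
     (z < e \<longleftrightarrow> z' < e) \<and> (z < l \<longleftrightarrow> z' < l)"

lemma T_iter_translate:
  assumes y: "0 \<le> y" "y < l"
    and same: "\<And>j. j \<le> N \<Longrightarrow> same_side ((rot ^^ j) y) ((rot ^^ j) y + \<tau>)"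
  shows "rot_time y k \<le> N \<Longrightarrow> (T ^^ k) (y + \<tau>) = (T ^^ k) y + \<tau>"
proof (induction k)
  case 0
  then show ?case by simp
next
  case (Suc k)
  define S where "S = rot_time y k"
  define w where "w = (T ^^ k) y"
  have SN: "S + rot_steps w \<le> N" using Suc.prems by (simp add: S_def w_def)
  then have IH: "(T ^^ k) (y + \<tau>) = w + \<tau>" using Suc.IH by (simp add: S_def w_def)
  have wS: "w = (rot ^^ S) y" using T_iter_eq_rot_iter[OF y] by (simp add: w_def S_def)
  have w: "0 \<le> w" "w < l" using T_iter_range[OF y] by (auto simp: w_def)
  have same0: "same_side w (w + \<tau>)" using same[of S] SN wS by simp
  then have w': "0 \<le> w + \<tau>" "w + \<tau> < l" using w by (auto simp: same_side_def)
  have rot_shift: "rot (w + \<tau>) = rot w + \<tau>"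
    using same0 rot_translate[of w "w + \<tau>"] by (simp add: same_side_def)
  have same1: "same_side (rot w) (rot w + \<tau>)"
    using same[of "Suc S"] SN wS by (simp add: rot_steps_def split: if_splits)
  have "T (w + \<tau>) = T w + \<tau>"
  proof (cases "rot w < l")
    case True
    then show ?thesis using T_eq_rot[OF w] T_eq_rot[OF w'] rot_shift same1 by (simp add: same_side_def)
  next
    case False
    have "rot (rot w + \<tau>) = rot (rot w) + \<tau>"
      using same1 rot_translate[of "rot w" "rot w + \<tau>"] by (simp add: same_side_def)
    then show ?thesis
      using False T_eq_rot[OF w] T_eq_rot[OF w'] rot_shift same1 by (simp add: same_side_def)
  qed
  then show ?case using IH by (simp add: w_def)
qed

lemma translate_same_coding:
  assumes y: "0 \<le> y" "y < l"
    and same: "\<And>j. j \<le> N \<Longrightarrow> same_side ((rot ^^ j) y) ((rot ^^ j) y + \<tau>)"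
    and k: "rot_time y k \<le> N"
  shows "cod ((T ^^ k) (y + \<tau>)) = cod ((T ^^ k) y)"
proof -
  define w where "w = (T ^^ k) y"
  have "same_side w (w + \<tau>)" using same[OF k] T_iter_eq_rot_iter[OF y] by (simp add: w_def)
  moreover have "0 \<le> w" using T_iter_range[OF y] by (simp add: w_def)
  ultimately have "cod (w + \<tau>) = cod w" by (auto simp: same_side_def coding_def)
  then show ?thesis using T_iter_translate[OF y same k] by (simp add: w_def)
qed

lemma not_same_side_near_discontinuity:
  assumes "0 \<le> z" "z < 1" and "\<not> same_side z (z + \<tau>)"
  shows "\<exists>b \<in> {0, l - 1 + e, e, l, 1}. \<bar>z - b\<bar> \<le> \<bar>\<tau>\<bar>"
proof -
  have "\<bar>z - 0\<bar> \<le> \<bar>\<tau>\<bar> \<or> \<bar>z - (l - 1 + e)\<bar> \<le> \<bar>\<tau>\<bar> \<or> \<bar>z - e\<bar> \<le> \<bar>\<tau>\<bar> \<or> \<bar>z - l\<bar> \<le> \<bar>\<tau>\<bar>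
     \<or> \<bar>z - 1\<bar> \<le> \<bar>\<tau>\<bar>"
    using assms unfolding same_side_def by (auto simp: abs_if split: if_splits)
  then show ?thesis by auto
qed

lemma T_orbit_dense:
  assumes x0: "0 \<le> x0" "x0 < l" and "0 < \<delta>" "\<delta> \<le> z" "z + \<delta> \<le> l"
  shows "\<exists>i. \<bar>(T ^^ i) x0 - z\<bar> < \<delta>"
proof -
  obtain n where n: "\<bar>err n\<bar> < \<delta>" using err_small[OF \<open>0 < \<delta>\<close>] by blast
  obtain j k where jk: "\<bar>real j * e - of_int k - (x0 - z)\<bar> < \<bar>err n\<bar>"
    using err_covering[of n "x0 - z"] by blast
  define w where "w = x0 - real j * e + of_int k"
  have wz: "\<bar>w - z\<bar> < \<delta>" using jk n by (simp add: w_def abs_minus_commute algebra_simps)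
  then have w: "0 \<le> w" "w < l" using assms by linarith+
  then have "(rot ^^ j) x0 = w" using x0 l_less_1 by (intro rot_iter_unique[OF _ _ _ _ w_def]) auto
  then obtain i where "(T ^^ i) x0 = w" using T_orbit_reaches[OF x0, of j] w by auto
  then show ?thesis using wz by blast
qed

section \<open>Repetitions in 3iet words\<close>

lemma T_iter_displacement_lower:
  assumes y: "0 \<le> y" "y < l" and M: "\<And>k. a k \<le> M" and "1 \<le> q"
  shows "1 \<le> (real M + 2) * (2 * real q) * \<bar>(T ^^ q) y - y\<bar>"
proof -
  define S where "S = rot_time y q"
  have "(T ^^ q) y = (rot ^^ S) y" using T_iter_eq_rot_iter[OF y] by (simp add: S_def)
  then obtain K where K: "(T ^^ q) y = y - real S * e + of_int K" using rot_iter_eq[of S y] by auto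
  have S: "q \<le> S" "S \<le> 2 * q" using rot_time_bounds by (auto simp: S_def)
  have "1 \<le> (real M + 2) * real S * \<bar>real S * e - of_int K\<bar>"
    using badly_approximable[OF M, of "int S" K] S \<open>1 \<le> q\<close> by (simp add: add.commute)
  also have "\<dots> \<le> (real M + 2) * (2 * real q) * \<bar>real S * e - of_int K\<bar>"
    using S by (intro mult_right_mono mult_left_mono) auto
  also have "\<bar>real S * e - of_int K\<bar> = \<bar>(T ^^ q) y - y\<bar>" by (simp add: K abs_minus_commute)
  finally show ?thesis .
qed

lemma repetition_length_bound:
  assumes y: "0 \<le> y" "y < l" and M: "\<And>k. a k \<le> M" and "1 \<le> q"
    and codes: "\<forall>k<m. cod ((T ^^ k) y) = cod ((T ^^ k) ((T ^^ q) y))"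
  shows "real m < 4 * (real M + 2)\<^sup>2 * real q"
proof (rule ccontr)
  define c where "c = real M + 2"
  define y' where "y' = (T ^^ q) y"
  define X where "X = c * (2 * real q)"
  have c_pos: "0 < c" by (simp add: c_def)
  have X_pos: "0 < X" using c_pos \<open>1 \<le> q\<close> by (simp add: X_def)
  have y': "0 \<le> y'" "y' < l" using T_iter_range[OF y] by (auto simp: y'_def)
  have t_large: "1 \<le> \<bar>y' - y\<bar> * X"
    using T_iter_displacement_lower[OF y M \<open>1 \<le> q\<close>] by (simp add: y'_def X_def c_def mult.commute)
  assume "\<not> ?thesis"
  then have m_large: "4 * (c * c) * real q \<le> real m" by (simp add: c_def power2_eq_square)
  have "c * 1 \<le> c * c" using c_pos by (intro mult_left_mono) (auto simp: c_def)
  moreover have "(c * c) * 1 \<le> (c * c) * real q" using \<open>1 \<le> q\<close> by (intro mult_left_mono) auto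
  moreover have "real M + 1 \<le> c" by (simp add: c_def)
  ultimately have "real M + 1 \<le> real m" using m_large by linarith
  then obtain n where n: "Q n + Q (Suc n) \<le> int m" "\<bar>err n\<bar> * real m < c"
    using exists_covering_scale[OF M] unfolding c_def by (metis of_nat_1 of_nat_add of_nat_le_iff)
  have "\<bar>err n\<bar> * (4 * (c * c) * real q) \<le> \<bar>err n\<bar> * real m"
    using m_large by (intro mult_left_mono) auto
  moreover have "c * (2 * \<bar>err n\<bar> * X) = \<bar>err n\<bar> * (4 * (c * c) * real q)"
    by (simp add: X_def algebra_simps)
  ultimately have "c * (2 * \<bar>err n\<bar> * X) < c * 1" using n(2) by linarith
  then have "2 * \<bar>err n\<bar> * X < 1" by (simp only: mult_less_cancel_left_pos[OF c_pos])
  with t_large have "2 * \<bar>err n\<bar> * X < \<bar>y' - y\<bar> * X" by linarith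
  then have "2 * \<bar>err n\<bar> < \<bar>y' - y\<bar>" by (simp only: mult_less_cancel_right_pos[OF X_pos])
  moreover have "Q n + Q (Suc n) \<le> int (rot_time y m) + 1" using n(1) rot_time_bounds[of m y] by linarith
  moreover have "y < 1" using y l_less_1 by simp
  ultimately obtain j where j: "j \<le> rot_time y m" "(rot ^^ j) y + (y' - y) \<notin> {0..<1}"
    using rot_orbit_translate_leaves_unit_interval[OF y(1)] by blast
  have "(rot ^^ j) y' = (rot ^^ j) y + (y' - y)"
    using same_coding_translate[OF y y'] codes j(1) by (simp add: y'_def)
  moreover have "0 \<le> (rot ^^ j) y'" "(rot ^^ j) y' < 1" using rot_iter_range y' l_less_1 by auto
  ultimately show False using j(2) by simp
qed

text \<open>The points frac (j e + b) + K with K \<in> {-1, 0, 1} are those near [0, 1) that the rotation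
  maps onto the discontinuity b in j steps.\<close>

lemma same_side_if_far_from_preimages:
  assumes y: "0 \<le> y" "y < 1" and "\<bar>\<tau>\<bar> < 1"
    and far: "\<And>b K. b \<in> {0, l - 1 + e, e, l, 1} \<Longrightarrow> K \<in> {-1, 0, 1} \<Longrightarrow>
      \<bar>\<tau>\<bar> < \<bar>y - (frac (real j * e + b) + of_int K)\<bar>"
  shows "same_side ((rot ^^ j) y) ((rot ^^ j) y + \<tau>)"
proof (rule ccontr)
  assume "\<not> ?thesis"
  moreover have "0 \<le> (rot ^^ j) y" "(rot ^^ j) y < 1" using rot_iter_range[OF y] by auto
  ultimately obtain b where b: "b \<in> {0, l - 1 + e, e, l, 1}" "\<bar>(rot ^^ j) y - b\<bar> \<le> \<bar>\<tau>\<bar>"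
    using not_same_side_near_discontinuity by blast
  obtain k where k: "(rot ^^ j) y = y - real j * e + of_int k" using rot_iter_eq by blast
  define K where "K = \<lfloor>real j * e + b\<rfloor> - k"
  have "y - (frac (real j * e + b) + of_int K) = (rot ^^ j) y - b" using k by (simp add: K_def frac_def)
  then have close: "\<bar>y - (frac (real j * e + b) + of_int K)\<bar> \<le> \<bar>\<tau>\<bar>" using b(2) by simp
  then have "-2 < real_of_int K" "real_of_int K < 2"
    using y \<open>\<bar>\<tau>\<bar> < 1\<close> frac_ge_0[of "real j * e + b"] frac_lt_1[of "real j * e + b"]
    unfolding abs_le_iff by linarith+
  then have "K \<in> {-1, 0, 1}" by auto
  then show False using far[OF b(1)] close by fastforce
qed

lemma T_orbit_point_avoiding_discontinuities:
  assumes x0: "0 \<le> x0" "x0 < l" and small: "30 * (real N + 1) * \<bar>\<tau>\<bar> < l"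
  shows "\<exists>i. \<forall>j \<le> N. same_side ((rot ^^ j) ((T ^^ i) x0)) ((rot ^^ j) ((T ^^ i) x0) + \<tau>)"
proof -
  define D where "D = set [0, l - 1 + e, e, l, 1]"
  define I where "I = {0..N} \<times> D \<times> {-1, 0, 1::int}"
  define c where "c = (\<lambda>(j, b, K). frac (real j * e + b) + of_int K)"
  have "card D \<le> 5" using card_length[of "[0, l - 1 + e, e, l, 1]"] by (simp add: D_def)
  moreover have "card I = (N + 1) * (card D * 3)" by (simp add: I_def card_cartesian_product)
  ultimately have "card I \<le> (N + 1) * 15" by (simp only:) (intro mult_le_mono2, simp)
  then have "real (card I) \<le> real ((N + 1) * 15)" by (simp only: of_nat_le_iff)
  then have "2 * \<bar>\<tau>\<bar> * real (card I) \<le> 2 * \<bar>\<tau>\<bar> * real ((N + 1) * 15)"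
    by (intro mult_left_mono) auto
  also have "\<dots> = 30 * (real N + 1) * \<bar>\<tau>\<bar>" by (simp add: algebra_simps)
  finally have "2 * \<bar>\<tau>\<bar> * real (card I) < l - 0" using small by simp
  moreover have "finite I" by (simp add: I_def D_def)
  ultimately obtain z \<delta> where "0 < \<delta>" "\<delta> \<le> z" "z + \<delta> \<le> l"
    and avoid: "\<And>x p. \<bar>x - z\<bar> < \<delta> \<Longrightarrow> p \<in> I \<Longrightarrow> \<bar>\<tau>\<bar> < \<bar>x - c p\<bar>"
    using exists_interval_avoiding_neighbourhoods[of I "\<bar>\<tau>\<bar>" l 0 c] by auto
  then obtain i where i: "\<bar>(T ^^ i) x0 - z\<bar> < \<delta>" using T_orbit_dense[OF x0] by blast
  have y: "0 \<le> (T ^^ i) x0" "(T ^^ i) x0 < 1" using T_iter_range[OF x0, of i] l_less_1 by auto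
  have "\<bar>\<tau>\<bar> \<le> 30 * (real N + 1) * \<bar>\<tau>\<bar>"
    using mult_right_mono[of 1 "30 * (real N + 1)" "\<bar>\<tau>\<bar>"] by simp
  then have "\<bar>\<tau>\<bar> < 1" using small l_less_1 by linarith
  have "same_side ((rot ^^ j) ((T ^^ i) x0)) ((rot ^^ j) ((T ^^ i) x0) + \<tau>)" if "j \<le> N" for j
    using y \<open>\<bar>\<tau>\<bar> < 1\<close> avoid[OF i, of "(j, _, _)"] that
    by (intro same_side_if_far_from_preimages) (auto simp: I_def D_def c_def)
  then show ?thesis by blast
qed

lemma T_orbit_reaches_translate:
  assumes y: "0 \<le> y" "y < l" and y': "0 \<le> y + \<tau>" "y + \<tau> < l"
    and "\<tau> \<noteq> 0" and \<tau>: "\<tau> = of_int K - real s * e"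
  shows "\<exists>q. 1 \<le> q \<and> q \<le> s \<and> (T ^^ q) y = y + \<tau>"
proof -
  have "(rot ^^ s) y = y + \<tau>"
    using y y' l_less_1 by (intro rot_iter_unique[where k = K]) (auto simp: \<tau>)
  then obtain q where q: "(T ^^ q) y = y + \<tau>" using T_orbit_reaches[OF y, of s] y' by auto
  then have "(rot ^^ rot_time y q) y = (rot ^^ s) y"
    using T_iter_eq_rot_iter[OF y] \<open>(rot ^^ s) y = y + \<tau>\<close> by simp
  then have "q \<le> s" using rot_iter_inj rot_time_bounds by metis
  moreover have "q \<noteq> 0" using q \<open>\<tau> \<noteq> 0\<close> by (cases q) auto
  ultimately show ?thesis using q by (intro exI[of _ q]) simp
qed

lemma block_period_iet3_word:
  "block_period (iet3_word e l x0) i n q \<longleftrightarrow>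
     (\<forall>k. k + q < n \<longrightarrow> cod ((T ^^ k) ((T ^^ i) x0)) = cod ((T ^^ k) ((T ^^ q) ((T ^^ i) x0))))"
proof -
  have "i + k = k + i" "i + k + q = k + (q + i)" for k by simp_all
  then have "(T ^^ (i + k)) x0 = (T ^^ k) ((T ^^ i) x0)"
    "(T ^^ (i + k + q)) x0 = (T ^^ k) ((T ^^ q) ((T ^^ i) x0))" for k
    by (simp_all only: funpow_add o_apply)
  then show ?thesis by (simp add: block_period_def iet3_word_def)
qed

lemma index_bounded_if_digits_bounded:
  assumes x0: "0 \<le> x0" "x0 < l" and M: "\<And>k. a k \<le> M"
  shows "index (iet3_word e l x0) \<le> ereal (4 * (real M + 2)\<^sup>2 + 1)"
proof (rule index_le_if_block_periods_bounded)
  fix i q n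
  assume "1 \<le> q" "q \<le> n" "block_period (iet3_word e l x0) i n q"
  then have "real (n - q) < 4 * (real M + 2)\<^sup>2 * real q"
    using T_iter_range[OF x0, of i] by (intro repetition_length_bound[OF _ _ M]) (auto simp: block_period_iet3_word)
  then show "real n \<le> (4 * (real M + 2)\<^sup>2 + 1) * real q" using \<open>q \<le> n\<close> by (simp add: algebra_simps)
qed

lemma translate_block_period:
  assumes x0: "0 \<le> x0" "x0 < l"
    and same: "\<And>j. j \<le> 2 * R * s \<Longrightarrow> same_side ((rot ^^ j) ((T ^^ i) x0)) ((rot ^^ j) ((T ^^ i) x0) + \<tau>)"
    and q: "q \<le> s" "(T ^^ q) ((T ^^ i) x0) = (T ^^ i) x0 + \<tau>"
  shows "block_period (iet3_word e l x0) i (q + R * s + 1) q"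
proof -
  have y: "0 \<le> (T ^^ i) x0" "(T ^^ i) x0 < l" using T_iter_range[OF x0] by auto
  have "cod ((T ^^ k) ((T ^^ i) x0)) = cod ((T ^^ k) ((T ^^ q) ((T ^^ i) x0)))"
    if "k + q < q + R * s + 1" for k
  proof -
    have "rot_time ((T ^^ i) x0) k \<le> 2 * R * s"
      using rot_time_bounds[of k "(T ^^ i) x0"] that unfolding mult.assoc by linarith
    then show ?thesis using translate_same_coding[OF y same] q(2) by simp
  qed
  then show ?thesis by (simp add: block_period_iet3_word)
qed

lemma long_repetition:
  assumes x0: "0 \<le> x0" "x0 < l" and "1 \<le> R" and big: "180 * real R < real (a m)"
  shows "\<exists>i q n. 1 \<le> q \<and> q \<le> n \<and> real (R + 1) * real q \<le> real n \<and> block_period (iet3_word e l x0) i n q"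
proof -
  define s where "s = nat (Q m)"
  define \<tau> where "\<tau> = - err m"
  have "m \<noteq> 0"
  proof
    assume "m = 0"
    then show False using big cf_digit_0 by simp
  qed
  then have "1 \<le> Q m" using cf_den_Suc_ge_1 by (cases m) auto
  then have "1 \<le> s" and Qs: "of_int (Q m) = real s" by (simp_all add: s_def)
  have "\<tau> \<noteq> 0" using err_nonzero by (simp add: \<tau>_def)
  have \<tau>_eq: "\<tau> = of_int (P m) - real s * e" by (simp add: \<tau>_def err_def Qs)
  have "1 * 1 \<le> real R * real s" using \<open>1 \<le> R\<close> \<open>1 \<le> s\<close> by (intro mult_mono) auto
  then have "real (2 * R * s) + 1 \<le> 3 * real R * real s" by simp
  then have "30 * (real (2 * R * s) + 1) * \<bar>\<tau>\<bar> \<le> 30 * (3 * real R * real s) * \<bar>\<tau>\<bar>"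
    by (intro mult_right_mono mult_left_mono) auto
  moreover have "180 * real R * real s * \<bar>\<tau>\<bar> < 1"
    using abs_err_small_if_digit_large[OF _ big] by (simp add: \<tau>_def Qs)
  moreover have "1 < 2 * l" using l_gt by simp
  ultimately have "30 * (real (2 * R * s) + 1) * \<bar>\<tau>\<bar> < l" by linarith
  then obtain i where same:
    "\<And>j. j \<le> 2 * R * s \<Longrightarrow> same_side ((rot ^^ j) ((T ^^ i) x0)) ((rot ^^ j) ((T ^^ i) x0) + \<tau>)"
    using T_orbit_point_avoiding_discontinuities[OF x0] by blast
  have y: "0 \<le> (T ^^ i) x0" "(T ^^ i) x0 < l" using T_iter_range[OF x0] by auto
  then have "0 \<le> (T ^^ i) x0 + \<tau>" "(T ^^ i) x0 + \<tau> < l" using same[of 0] by (auto simp: same_side_def)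
  then obtain q where q: "1 \<le> q" "q \<le> s" "(T ^^ q) ((T ^^ i) x0) = (T ^^ i) x0 + \<tau>"
    using T_orbit_reaches_translate[OF y _ _ \<open>\<tau> \<noteq> 0\<close> \<tau>_eq] by blast
  have "R * q \<le> R * s" using q(2) by (rule mult_le_mono2)
  then have "(R + 1) * q \<le> q + R * s + 1" unfolding distrib_right by linarith
  then have "real (R + 1) * real q \<le> real (q + R * s + 1)" by (simp only: of_nat_mult[symmetric] of_nat_le_iff)
  moreover have "q \<le> q + R * s + 1" by simp
  ultimately show ?thesis using q(1) translate_block_period[OF x0 same q(2,3)] by blast
qed

lemma index_ge_if_digit_large:
  assumes x0: "0 \<le> x0" "x0 < l" and "1 \<le> R" and "180 * real R < real (a m)"
  shows "ereal (real R + 1) \<le> index (iet3_word e l x0)"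
proof -
  obtain i q n where "1 \<le> q" "q \<le> n" "real (R + 1) * real q \<le> real n"
    and per: "block_period (iet3_word e l x0) i n q"
    using long_repetition[OF assms] by blast
  then have "ereal (real R + 1) \<le> ereal (real n / real q)" by (simp add: le_divide_eq add.commute)
  also have "\<dots> \<le> index (iet3_word e l x0)" by (rule index_ge_block_period[OF \<open>1 \<le> q\<close> \<open>q \<le> n\<close> per])
  finally show ?thesis .
qed

end

theorem theorem4:
  fixes eps l x0 :: real
  assumes "0 < eps" "eps < 1" "eps \<notin> \<rat>"
    and "max eps (1 - eps) < l" "l < 1"
    and "0 \<le> x0" "x0 < l"
  shows "index (iet3_word eps l x0) < \<infinity> \<longleftrightarrow> bdd_above (range (cf_digit eps))"
proof -
  interpret iet3 eps l
    using assms by unfold_locales auto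
  have x0: "0 \<le> x0" "x0 < l" using assms by auto
  show ?thesis
  proof
    assume "index (iet3_word eps l x0) < \<infinity>"
    then obtain B where B: "index (iet3_word eps l x0) \<le> ereal B"
      by (cases "index (iet3_word eps l x0)") auto
    define R where "R = nat \<lceil>B\<rceil> + 1"
    have "a m \<le> 180 * R" for m
    proof (rule ccontr)
      assume "\<not> a m \<le> 180 * R"
      then have "180 * real R < real (a m)" by simp
      then have "ereal (real R + 1) \<le> ereal B"
        by (intro order_trans[OF _ B] index_ge_if_digit_large[OF x0]) (simp_all add: R_def)
      then show False unfolding R_def by simp linarith
    qed
    then show "bdd_above (range a)" by (rule bdd_aboveI2)
  next
    assume "bdd_above (range a)"
    then obtain M where "\<And>k. a k \<le> M" by (auto simp: bdd_above_def)
    then have "index (iet3_word eps l x0) \<le> ereal (4 * (real M + 2)\<^sup>2 + 1)"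
      by (rule index_bounded_if_digits_bounded[OF x0])
    then show "index (iet3_word eps l x0) < \<infinity>" by (rule le_less_trans) simp
  qed
qed

end
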